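(* Let $X \subseteq {}^\omega 2$ and let $D \subseteq \mathbb{S}$ satisfy: (a) $D$ is dense: for every $p\in\mathbb S$ there is $q\le p$ with $q\in D$; (b) $D$ is translation-invariant: for every $p\in\mathbb S$ and $t\in{}^\omega 2$, $p\in D$ iff $p+t\in D$; (c) for every cardinal $\mu<\mathfrak c$ and every family $\{p_\alpha:\alpha<\mu\}\subseteq D$ we have $X\not\subseteq\bigcup_{\alpha<\mu}[p_\alpha]$. Then there is $Y\in s_0$ with $X+Y={}^\omega 2$; i.e., $X$ is not $s_0$-shiftable.
   Context: ${}^\omega 2$ is the Cantor space with bitwise addition modulo $2$, denoted $+$; $\mathfrak c=2^{\aleph_0}$. $\mathbb S$ (Sacks forcing) is the set of perfect subtrees of ${}^{<\omega}2$, ordered by inclusion ($q\le p$ iff $q\subseteq p$); $[p]$ denotes the set of branches of $p$. For $p\in\mathbb S$ and $t\in{}^\omega 2$, $p+t=\{\sigma+t\restriction|\sigma| : \sigma\in p\}$, so $[p+t]=[p]+t$. A set $Y \subseteq {}^\omega 2$ is Marczewski null ($Y \in s_0$) if for every $p\in\mathbb S$ there is $q\le p$ with $[q]\cap Y=\emptyset$. A set $X$ is $s_0$-shiftable if $X+Y\neq{}^\omega 2$ for every $Y\in s_0$. *)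

theory Defs
  imports Main
begin

text \<open>Cantor space: elements are functions nat \<Rightarrow> bool; addition mod 2 is pointwise xor.
  Finite binary sequences (elements of 2^{<omega}) are bool lists; list index i is bit i.\<close>

type_synonym cantor = "nat \<Rightarrow> bool"

definition cadd :: "cantor \<Rightarrow> cantor \<Rightarrow> cantor" where
  "cadd x y = (\<lambda>n. x n \<noteq> y n)"

definition set_sum :: "cantor set \<Rightarrow> cantor set \<Rightarrow> cantor set" where
  "set_sum X Y = {cadd x y | x y. x \<in> X \<and> y \<in> Y}"

definition restr :: "cantor \<Rightarrow> nat \<Rightarrow> bool list" where
  "restr x n = map x [0..<n]"

definition is_tree :: "bool list set \<Rightarrow> bool" where
  "is_tree p \<longleftrightarrow> p \<noteq> {} \<and> (\<forall>\<sigma>\<in>p. \<forall>n. take n \<sigma> \<in> p)"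

definition perfect_tree :: "bool list set \<Rightarrow> bool" where
  "perfect_tree p \<longleftrightarrow> is_tree p \<and>
     (\<forall>\<sigma>\<in>p. \<exists>\<tau>. (\<exists>\<rho>. \<tau> = \<sigma> @ \<rho>) \<and> \<tau> @ [False] \<in> p \<and> \<tau> @ [True] \<in> p)"

definition Sacks :: "bool list set set" where
  "Sacks = {p. perfect_tree p}"

definition branches :: "bool list set \<Rightarrow> cantor set" where
  "branches p = {x. \<forall>n. restr x n \<in> p}"

definition tree_shift :: "bool list set \<Rightarrow> cantor \<Rightarrow> bool list set" where
  "tree_shift p t = {map2 (\<noteq>) \<sigma> (restr t (length \<sigma>)) | \<sigma>. \<sigma> \<in> p}"

definition marczewski_null :: "cantor set \<Rightarrow> bool" where
  "marczewski_null Y \<longleftrightarrow> (\<forall>p\<in>Sacks. \<exists>q\<in>Sacks. q \<subseteq> p \<and> branches q \<inter> Y = {})"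

definition s0_shiftable :: "cantor set \<Rightarrow> bool" where
  "s0_shiftable X \<longleftrightarrow> (\<forall>Y. marczewski_null Y \<longrightarrow> set_sum X Y \<noteq> UNIV)"

end

theory Submission
  imports Defs "HOL-Library.Sublist" "HOL-Library.Countable"
begin

text \<open>Enumerate \<open>D\<close> as \<open>\<langle>p\<^sub>\<alpha> : \<alpha> < \<mathfrak>c\<rangle>\<close>, using the points of the Cantor space themselves,
  well-ordered in type \<open>\<mathfrak>c\<close>, as indices. By translation invariance and the smallness hypothesis
  one can pick \<open>x\<^sub>\<alpha> \<in> X\<close> outside \<open>\<Union>\<^sub>\<beta>\<^sub><\<^sub>\<alpha> [p\<^sub>\<beta>] + \<alpha>\<close>; then \<open>y\<^sub>\<alpha> = x\<^sub>\<alpha> + \<alpha>\<close> gives \<open>X + {y\<^sub>\<alpha>} = \<^sup>\<omega>2\<close>,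
  and \<open>y\<^sub>\<alpha> \<notin> [p\<^sub>\<beta>]\<close> for \<open>\<beta> < \<alpha>\<close>, so every \<open>[p\<^sub>\<beta>]\<close> meets \<open>Y\<close> in fewer than \<open>\<mathfrak>c\<close> points. A perfect tree
  has \<open>\<mathfrak>c\<close> perfect subtrees with pairwise disjoint bodies, so one of them misses such a small set;
  by density of \<open>D\<close> this makes \<open>Y\<close> Marczewski null.\<close>

unbundle cardinal_syntax

lemma length_restr [simp]: "length (restr x n) = n"
  by (simp add: restr_def)

lemma prefix_restr_mono: "m \<le> n \<Longrightarrow> prefix (restr x m) (restr x n)"
  unfolding restr_def by (metis le_add_diff_inverse map_append prefixI upt_add_eq_append zero_le)

lemma cadd_cadd_self: "cadd x (cadd x z) = z"
  by (auto simp: cadd_def)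

lemma branches_mono: "q \<subseteq> p \<Longrightarrow> branches q \<subseteq> branches p"
  by (auto simp: branches_def)

lemma shifted_node_eq_restr_iff:
  "length \<sigma> = n \<Longrightarrow> map2 (\<noteq>) \<sigma> (restr t n) = restr x n \<longleftrightarrow> \<sigma> = restr (cadd x t) n"
  by (auto simp: list_eq_iff_nth_eq restr_def cadd_def)

lemma mem_branches_tree_shift: "x \<in> branches (tree_shift q t) \<longleftrightarrow> cadd x t \<in> branches q"
proof
  assume x: "x \<in> branches (tree_shift q t)"
  show "cadd x t \<in> branches q"
    unfolding branches_def
  proof (intro CollectI allI)
    fix n
    from x obtain \<sigma> where \<sigma>: "\<sigma> \<in> q" "restr x n = map2 (\<noteq>) \<sigma> (restr t (length \<sigma>))"
      unfolding branches_def tree_shift_def by blast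
    then have "length \<sigma> = n"
      by (metis length_map length_zip min.idem length_restr)
    with \<sigma> show "restr (cadd x t) n \<in> q"
      using shifted_node_eq_restr_iff[of \<sigma> n t x] by simp
  qed
next
  assume x: "cadd x t \<in> branches q"
  show "x \<in> branches (tree_shift q t)"
    unfolding branches_def tree_shift_def
  proof (intro CollectI allI exI conjI)
    fix n
    show "restr (cadd x t) n \<in> q"
      using x by (simp add: branches_def)
    show "restr x n = map2 (\<noteq>) (restr (cadd x t) n) (restr t (length (restr (cadd x t) n)))"
      using shifted_node_eq_restr_iff[of "restr (cadd x t) n" n t x] by simp
  qed
qed

lemma tree_prefix_closed: "is_tree q \<Longrightarrow> \<tau> \<in> q \<Longrightarrow> prefix \<rho> \<tau> \<Longrightarrow> \<rho> \<in> q"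
  unfolding is_tree_def prefix_def by (metis append_eq_conv_conj)

lemma Nil_in_tree: "is_tree q \<Longrightarrow> [] \<in> q"
  unfolding is_tree_def by (metis all_not_in_conv take_0)

definition split_node :: "bool list set \<Rightarrow> bool list \<Rightarrow> bool list" where
  "split_node q \<tau> = (SOME \<tau>'. prefix \<tau> \<tau>' \<and> \<tau>' @ [False] \<in> q \<and> \<tau>' @ [True] \<in> q)"

text \<open>An embedding of the full binary tree into the perfect tree \<open>q\<close>: every code is sent to a
  splitting node of \<open>q\<close>, and appending the bit \<open>b\<close> moves on to a splitting node above the
  \<open>b\<close>-successor.\<close>

definition scheme :: "bool list set \<Rightarrow> bool list \<Rightarrow> bool list" where
  "scheme q \<sigma> = fold (\<lambda>b \<tau>. split_node q (\<tau> @ [b])) \<sigma> (split_node q [])"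

lemma split_node_spec:
  assumes "perfect_tree q" "\<tau> \<in> q"
  shows "prefix \<tau> (split_node q \<tau>) \<and> split_node q \<tau> @ [False] \<in> q \<and> split_node q \<tau> @ [True] \<in> q"
proof -
  from assms obtain \<tau>' where "(\<exists>\<rho>. \<tau>' = \<tau> @ \<rho>) \<and> \<tau>' @ [False] \<in> q \<and> \<tau>' @ [True] \<in> q"
    unfolding perfect_tree_def by blast
  then have "prefix \<tau> \<tau>' \<and> \<tau>' @ [False] \<in> q \<and> \<tau>' @ [True] \<in> q"
    by (auto simp: prefix_def)
  then show ?thesis
    unfolding split_node_def by (rule someI)
qed

lemma split_node_snoc_in: "perfect_tree q \<Longrightarrow> \<tau> \<in> q \<Longrightarrow> split_node q \<tau> @ [b] \<in> q"
  using split_node_spec[of q \<tau>] by (cases b) auto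

lemma scheme_Nil [simp]: "scheme q [] = split_node q []"
  by (simp add: scheme_def)

lemma scheme_snoc [simp]: "scheme q (\<sigma> @ [b]) = split_node q (scheme q \<sigma> @ [b])"
  by (simp add: scheme_def)

lemma scheme_snoc_in:
  assumes q: "perfect_tree q"
  shows "scheme q \<sigma> @ [b] \<in> q"
proof (induction \<sigma> arbitrary: b rule: rev_induct)
  case Nil
  have "[] \<in> q"
    using q Nil_in_tree perfect_tree_def by blast
  then show ?case
    using split_node_snoc_in[OF q] by simp
next
  case (snoc c \<sigma>)
  then show ?case
    using split_node_snoc_in[OF q] by simp
qed

lemma scheme_in: "perfect_tree q \<Longrightarrow> scheme q \<sigma> \<in> q"
  using scheme_snoc_in tree_prefix_closed perfect_tree_def by (metis prefixI)

lemma prefix_scheme_snoc: "perfect_tree q \<Longrightarrow> prefix (scheme q \<sigma> @ [b]) (scheme q (\<sigma> @ [b]))"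
  using split_node_spec scheme_snoc_in by simp

lemma scheme_prefix_mono:
  assumes q: "perfect_tree q" and "prefix \<sigma> \<sigma>'"
  shows "prefix (scheme q \<sigma>) (scheme q \<sigma>')"
proof -
  obtain \<rho> where "\<sigma>' = \<sigma> @ \<rho>"
    using \<open>prefix \<sigma> \<sigma>'\<close> by (auto simp: prefix_def)
  moreover have "prefix (scheme q \<sigma>) (scheme q (\<sigma> @ \<rho>))"
  proof (induction \<rho> rule: rev_induct)
    case (snoc b \<rho>)
    have "prefix (scheme q (\<sigma> @ \<rho>)) (scheme q ((\<sigma> @ \<rho>) @ [b]))"
      using prefix_scheme_snoc[OF q, of "\<sigma> @ \<rho>" b] by (metis prefix_order.dual_order.trans prefixI)
    with snoc show ?case
      by (metis append_assoc prefix_order.dual_order.trans)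
  qed simp
  ultimately show ?thesis
    by simp
qed

text \<open>Distinct codes of equal length first differ after a common part \<open>\<pi>\<close>, where the scheme
  branches into \<open>scheme q \<pi> @ [a]\<close> and \<open>scheme q \<pi> @ [\<not> a]\<close>.\<close>

lemma scheme_incomparable:
  assumes q: "perfect_tree q" and "length \<sigma> = length \<sigma>'" "\<sigma> \<noteq> \<sigma>'"
    and "prefix (scheme q \<sigma>) \<xi>" "prefix (scheme q \<sigma>') \<xi>"
  shows False
proof -
  obtain \<pi> \<rho> \<rho>' where split: "\<sigma> = \<pi> @ \<rho>" "\<sigma>' = \<pi> @ \<rho>'" "\<rho> = [] \<or> \<rho>' = [] \<or> hd \<rho> \<noteq> hd \<rho>'"
    using longest_common_prefix by blast
  with assms have "\<rho> \<noteq> []" "\<rho>' \<noteq> []"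
    by auto
  then obtain a \<theta> a' \<theta>' where \<rho>: "\<rho> = a # \<theta>" "\<rho>' = a' # \<theta>'"
    by (meson list.exhaust)
  with split have "a \<noteq> a'"
    by auto
  have "prefix (scheme q \<pi> @ [c]) (scheme q (\<pi> @ c # \<eta>))" for c \<eta>
    using prefix_scheme_snoc[OF q, of \<pi> c] scheme_prefix_mono[OF q, of "\<pi> @ [c]" "\<pi> @ c # \<eta>"]
    by (metis prefix_order.dual_order.trans prefixI append.assoc append_Cons append_Nil)
  with split \<rho> assms have "prefix (scheme q \<pi> @ [a]) \<xi>" "prefix (scheme q \<pi> @ [a']) \<xi>"
    by (meson prefix_order.dual_order.trans)+
  then show False
    using \<open>a \<noteq> a'\<close> prefix_same_cases by fastforce
qed

definition follows_on_evens :: "cantor \<Rightarrow> bool list \<Rightarrow> bool" where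
  "follows_on_evens z \<sigma> \<longleftrightarrow> (\<forall>n. 2 * n < length \<sigma> \<longrightarrow> \<sigma> ! (2 * n) = z n)"

text \<open>The odd positions of the codes are free, which keeps the subtree perfect; the even
  positions record \<open>z\<close>, which makes the bodies for distinct \<open>z\<close> disjoint.\<close>

definition coded_subtree :: "bool list set \<Rightarrow> cantor \<Rightarrow> bool list set" where
  "coded_subtree q z = {\<tau>. \<exists>\<sigma>. follows_on_evens z \<sigma> \<and> prefix \<tau> (scheme q \<sigma>)}"

lemma follows_on_evens_take: "follows_on_evens z \<sigma> \<Longrightarrow> follows_on_evens z (take k \<sigma>)"
  unfolding follows_on_evens_def by auto

lemma coded_subtree_subset: "perfect_tree q \<Longrightarrow> coded_subtree q z \<subseteq> q"
  unfolding coded_subtree_def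
  using tree_prefix_closed scheme_in perfect_tree_def by blast

lemma perfect_coded_subtree:
  assumes q: "perfect_tree q"
  shows "perfect_tree (coded_subtree q z)"
  unfolding perfect_tree_def is_tree_def
proof (intro conjI ballI allI)
  have "follows_on_evens z []"
    by (simp add: follows_on_evens_def)
  then show "coded_subtree q z \<noteq> {}"
    unfolding coded_subtree_def by blast
next
  fix \<tau> n
  assume "\<tau> \<in> coded_subtree q z"
  then show "take n \<tau> \<in> coded_subtree q z"
    unfolding coded_subtree_def using take_is_prefix prefix_order.dual_order.trans by blast
next
  fix \<tau>
  assume "\<tau> \<in> coded_subtree q z"
  then obtain \<sigma> where \<sigma>: "follows_on_evens z \<sigma>" "prefix \<tau> (scheme q \<sigma>)"
    unfolding coded_subtree_def by blast
  define \<sigma>' where "\<sigma>' = (if even (length \<sigma>) then \<sigma> @ [z (length \<sigma> div 2)] else \<sigma>)"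
  have "odd (length \<sigma>')" "prefix \<sigma> \<sigma>'"
    by (simp_all add: \<sigma>'_def)
  have "follows_on_evens z \<sigma>'"
    using \<sigma>(1) unfolding \<sigma>'_def follows_on_evens_def by (auto simp: nth_append less_Suc_eq)
  with \<open>odd (length \<sigma>')\<close> have "follows_on_evens z (\<sigma>' @ [b])" for b
    unfolding follows_on_evens_def by (auto simp: nth_append less_Suc_eq, (metis dvd_triv_left)+)
  then have "scheme q \<sigma>' @ [b] \<in> coded_subtree q z" for b
    unfolding coded_subtree_def using prefix_scheme_snoc[OF q] by blast
  moreover have "prefix \<tau> (scheme q \<sigma>')"
    using scheme_prefix_mono[OF q \<open>prefix \<sigma> \<sigma>'\<close>] \<sigma>(2) by (meson prefix_order.dual_order.trans)
  ultimately show "\<exists>\<tau>'. (\<exists>\<rho>. \<tau>' = \<tau> @ \<rho>) \<and> \<tau>' @ [False] \<in> coded_subtree q z \<and> \<tau>' @ [True] \<in> coded_subtree q z"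
    by (auto simp: prefix_def)
qed

text \<open>Only finitely many codes have length at most \<open>k\<close>, so a long enough initial segment of the
  branch lies above the scheme node of a code longer than \<open>k\<close>.\<close>

lemma branch_of_coded_subtree_passes_scheme:
  assumes q: "perfect_tree q" and x: "x \<in> branches (coded_subtree q z)"
  shows "\<exists>\<sigma> m. follows_on_evens z \<sigma> \<and> length \<sigma> = k \<and> prefix (scheme q \<sigma>) (restr x m)"
proof -
  define m where "m = Suc (Max ((length \<circ> scheme q) ` {\<sigma>. length \<sigma> \<le> k}))"
  have short: "length (scheme q \<sigma>) < m" if "length \<sigma> \<le> k" for \<sigma>
  proof -
    have "finite {\<sigma> :: bool list. length \<sigma> \<le> k}"
      using finite_lists_length_le[of "UNIV :: bool set" k] by simp
    with that show ?thesis
      unfolding m_def by (simp add: le_imp_less_Suc)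
  qed
  from x obtain \<sigma>' where \<sigma>': "follows_on_evens z \<sigma>'" "prefix (restr x m) (scheme q \<sigma>')"
    unfolding branches_def coded_subtree_def by blast
  then have "k < length \<sigma>'"
    using short[of \<sigma>'] prefix_length_le[OF \<sigma>'(2)] by fastforce
  define \<sigma> where "\<sigma> = take k \<sigma>'"
  have "length \<sigma> = k" "follows_on_evens z \<sigma>"
    using \<open>k < length \<sigma>'\<close> \<sigma>'(1) by (simp_all add: \<sigma>_def follows_on_evens_take)
  have "prefix (scheme q \<sigma>) (scheme q \<sigma>')"
    unfolding \<sigma>_def by (rule scheme_prefix_mono[OF q take_is_prefix])
  then have "prefix (scheme q \<sigma>) (restr x m) \<or> prefix (restr x m) (scheme q \<sigma>)"
    using \<sigma>'(2) prefix_same_cases by blast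
  moreover have "length (scheme q \<sigma>) < m"
    using short \<open>length \<sigma> = k\<close> by simp
  ultimately have "prefix (scheme q \<sigma>) (restr x m)"
    using prefix_length_le[of "restr x m" "scheme q \<sigma>"] by auto
  with \<open>length \<sigma> = k\<close> \<open>follows_on_evens z \<sigma>\<close> show ?thesis
    by blast
qed

lemma branches_coded_subtree_disjoint:
  assumes q: "perfect_tree q" and "z \<noteq> w"
  shows "branches (coded_subtree q z) \<inter> branches (coded_subtree q w) = {}"
proof (rule ccontr)
  assume "branches (coded_subtree q z) \<inter> branches (coded_subtree q w) \<noteq> {}"
  then obtain x where x: "x \<in> branches (coded_subtree q z)" "x \<in> branches (coded_subtree q w)"
    by blast
  from \<open>z \<noteq> w\<close> obtain n where "z n \<noteq> w n"
    by blast
  obtain \<sigma> m where \<sigma>: "follows_on_evens z \<sigma>" "length \<sigma> = Suc (2 * n)" "prefix (scheme q \<sigma>) (restr x m)"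
    using branch_of_coded_subtree_passes_scheme[OF q x(1)] by blast
  obtain \<sigma>' m' where \<sigma>': "follows_on_evens w \<sigma>'" "length \<sigma>' = Suc (2 * n)" "prefix (scheme q \<sigma>') (restr x m')"
    using branch_of_coded_subtree_passes_scheme[OF q x(2)] by blast
  have "\<sigma> \<noteq> \<sigma>'"
    using \<sigma> \<sigma>' \<open>z n \<noteq> w n\<close> by (auto simp: follows_on_evens_def)
  moreover have "prefix (scheme q \<sigma>) (restr x (max m m'))" "prefix (scheme q \<sigma>') (restr x (max m m'))"
    using \<sigma>(3) \<sigma>'(3) prefix_restr_mono
    by (meson max.cobounded1 max.cobounded2 prefix_order.dual_order.trans)+
  moreover have "length \<sigma> = length \<sigma>'"
    using \<sigma>(2) \<sigma>'(2) by simp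
  ultimately show False
    using scheme_incomparable[OF q] by blast
qed

lemma perfect_tree_avoids_small_set:
  assumes q: "q \<in> Sacks" and S: "|S| <o |UNIV :: cantor set|"
  shows "\<exists>q'\<in>Sacks. q' \<subseteq> q \<and> branches q' \<inter> S = {}"
proof (rule ccontr)
  assume none: "\<not> ?thesis"
  have "perfect_tree q"
    using q by (simp add: Sacks_def)
  have "branches (coded_subtree q z) \<inter> S \<noteq> {}" for z
  proof -
    have "coded_subtree q z \<in> Sacks"
      by (simp add: Sacks_def perfect_coded_subtree[OF \<open>perfect_tree q\<close>])
    with none show ?thesis
      using coded_subtree_subset[OF \<open>perfect_tree q\<close>] by blast
  qed
  then obtain s where s: "\<And>z. s z \<in> branches (coded_subtree q z) \<inter> S"
    by (meson all_not_in_conv)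
  have "inj s"
  proof (rule injI)
    fix z w
    assume "s z = s w"
    then have "s z \<in> branches (coded_subtree q z) \<inter> branches (coded_subtree q w)"
      using s[of z] s[of w] by simp
    then show "z = w"
      using branches_coded_subtree_disjoint[OF \<open>perfect_tree q\<close>] by blast
  qed
  then have "|UNIV :: cantor set| \<le>o |S|"
    using s card_of_ordLeqI[of s UNIV S] by blast
  with S show False
    using not_ordLess_ordLeq by blast
qed

lemma card_of_tree_family_le: "|D| \<le>o |UNIV :: cantor set|" for D :: "bool list set set"
proof -
  have "inj (\<lambda>(P :: bool list set) n. n \<in> to_nat ` P)"
  proof (rule injI)
    fix P P' :: "bool list set"
    assume "(\<lambda>n. n \<in> to_nat ` P) = (\<lambda>n. n \<in> to_nat ` P')"
    then have "to_nat ` P = to_nat ` P'"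
      by (metis Collect_mem_eq)
    then show "P = P'"
      by (simp add: inj_image_eq_iff)
  qed
  then show ?thesis
    by (intro card_of_ordLeqI[of _ D UNIV]) (auto intro: inj_on_subset)
qed

lemma infinite_cantor_space: "infinite (UNIV :: cantor set)"
proof -
  have "inj (\<lambda>n m :: nat. m = n)"
    by (rule injI) metis
  then show ?thesis
    using inj_on_finite[of "\<lambda>n m :: nat. m = n" UNIV UNIV] by blast
qed

lemma marczewski_null_if_small_traces:
  assumes D_sub: "D \<subseteq> Sacks" and dense: "\<forall>p\<in>Sacks. \<exists>q\<in>D. q \<subseteq> p"
    and small: "\<And>q. q \<in> D \<Longrightarrow> |branches q \<inter> Y| <o |UNIV :: cantor set|"
  shows "marczewski_null Y"
  unfolding marczewski_null_def
proof
  fix p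
  assume "p \<in> Sacks"
  with dense obtain q where "q \<in> D" "q \<subseteq> p"
    by blast
  then obtain q' where "q' \<in> Sacks" "q' \<subseteq> q" "branches q' \<inter> (branches q \<inter> Y) = {}"
    using perfect_tree_avoids_small_set[of q "branches q \<inter> Y"] D_sub small[of q] by blast
  moreover have "branches q' \<subseteq> branches q"
    using \<open>q' \<subseteq> q\<close> by (rule branches_mono)
  ultimately have "branches q' \<inter> Y = {}"
    by blast
  with \<open>q' \<in> Sacks\<close> \<open>q' \<subseteq> q\<close> \<open>q \<subseteq> p\<close> show "\<exists>q'\<in>Sacks. q' \<subseteq> p \<and> branches q' \<inter> Y = {}"
    by (intro bexI[of _ q']) auto
qed

lemma card_of_underS_UNIV: "|underS |UNIV :: 'a set| a| <o |UNIV :: 'a set|"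
  by (rule card_of_underS) (simp_all add: card_of_card_order_on Field_card_of)

lemma card_of_insert_underS_UNIV:
  assumes "infinite (UNIV :: 'a set)"
  shows "|insert a (underS |UNIV :: 'a set| a)| <o |UNIV :: 'a set|"
proof -
  have singleton: "|{a}| <o |UNIV :: 'a set|"
    using finite_ordLess_infinite[OF card_of_Well_order card_of_Well_order, of "{a}" "UNIV :: 'a set"]
      assms by (simp add: Field_card_of)
  show ?thesis
    using card_of_Un_ordLess_infinite[OF assms singleton card_of_underS_UNIV[of a]] by simp
qed

lemma translates_cover_with_small_traces:
  fixes A :: "cantor \<Rightarrow> cantor set"
  assumes avoid: "\<And>\<alpha>. \<exists>x\<in>X. \<forall>\<beta>\<in>underS |UNIV :: cantor set| \<alpha>. cadd x \<alpha> \<notin> A \<beta>"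
  shows "\<exists>Y. set_sum X Y = UNIV \<and> (\<forall>\<beta>. |A \<beta> \<inter> Y| <o |UNIV :: cantor set| )"
proof -
  define r where "r = |UNIV :: cantor set|"
  have total: "total_on UNIV r"
    using card_of_Well_order[of "UNIV :: cantor set"]
    unfolding r_def well_order_on_def linear_order_on_def by (simp add: Field_card_of)
  obtain x where x: "\<And>\<alpha>. x \<alpha> \<in> X" "\<And>\<alpha> \<beta>. \<beta> \<in> underS r \<alpha> \<Longrightarrow> cadd (x \<alpha>) \<alpha> \<notin> A \<beta>"
    using avoid unfolding r_def by metis
  define y where "y \<alpha> = cadd (x \<alpha>) \<alpha>" for \<alpha>
  have "\<alpha> \<in> set_sum X (range y)" for \<alpha>
  proof -
    have "\<alpha> = cadd (x \<alpha>) (y \<alpha>)"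
      by (simp add: y_def cadd_cadd_self)
    with x(1) show ?thesis
      unfolding set_sum_def by blast
  qed
  moreover have "|A \<beta> \<inter> range y| <o r" for \<beta>
  proof -
    have "A \<beta> \<inter> range y \<subseteq> y ` insert \<beta> (underS r \<beta>)"
    proof
      fix v
      assume "v \<in> A \<beta> \<inter> range y"
      then obtain \<alpha> where "v = y \<alpha>" "y \<alpha> \<in> A \<beta>"
        by blast
      then have "\<beta> \<notin> underS r \<alpha>"
        using x(2)[of \<beta> \<alpha>] by (auto simp: y_def)
      then have "\<alpha> = \<beta> \<or> \<alpha> \<in> underS r \<beta>"
        using total unfolding total_on_def underS_def by blast
      with \<open>v = y \<alpha>\<close> show "v \<in> y ` insert \<beta> (underS r \<beta>)"
        by blast
    qed
    then have "|A \<beta> \<inter> range y| \<le>o |insert \<beta> (underS r \<beta>)|"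
      by (meson card_of_mono1 card_of_image ordLeq_transitive)
    moreover have "|insert \<beta> (underS r \<beta>)| <o r"
      unfolding r_def by (rule card_of_insert_underS_UNIV[OF infinite_cantor_space])
    ultimately show ?thesis
      by (rule ordLeq_ordLess_trans)
  qed
  ultimately show ?thesis
    unfolding r_def by blast
qed

lemma exists_point_off_shifted_predecessors:
  fixes f :: "cantor \<Rightarrow> bool list set"
  assumes f: "range f \<subseteq> D" and D_sub: "D \<subseteq> Sacks"
    and invariant: "\<forall>p\<in>Sacks. \<forall>t. p \<in> D \<longleftrightarrow> tree_shift p t \<in> D"
    and small: "\<forall>F. F \<subseteq> D \<and> |F| <o |UNIV :: cantor set| \<longrightarrow> \<not> X \<subseteq> (\<Union>p\<in>F. branches p)"
  shows "\<exists>x\<in>X. \<forall>\<beta>\<in>underS |UNIV :: cantor set| \<alpha>. cadd x \<alpha> \<notin> branches (f \<beta>)"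
proof -
  let ?F = "(\<lambda>\<beta>. tree_shift (f \<beta>) \<alpha>) ` underS |UNIV :: cantor set| \<alpha>"
  have "?F \<subseteq> D"
  proof (rule image_subsetI)
    fix \<beta>
    have "f \<beta> \<in> D"
      using f by blast
    with D_sub invariant show "tree_shift (f \<beta>) \<alpha> \<in> D"
      by blast
  qed
  moreover have "|?F| <o |UNIV :: cantor set|"
    using card_of_image card_of_underS_UNIV by (rule ordLeq_ordLess_trans)
  ultimately have "\<not> X \<subseteq> (\<Union>p\<in>?F. branches p)"
    using small by blast
  then obtain x where "x \<in> X" "x \<notin> (\<Union>p\<in>?F. branches p)"
    by blast
  then show ?thesis
    by (auto simp: mem_branches_tree_shift)
qed

theorem lemma2p1:
  fixes X :: "cantor set" and D :: "bool list set set"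
  assumes D_sub: "D \<subseteq> Sacks"
    and dense: "\<forall>p\<in>Sacks. \<exists>q\<in>D. q \<subseteq> p"
    and invariant: "\<forall>p\<in>Sacks. \<forall>t. p \<in> D \<longleftrightarrow> tree_shift p t \<in> D"
    and small: "\<forall>F. F \<subseteq> D \<and> (card_of F, card_of (UNIV :: cantor set)) \<in> ordLess \<longrightarrow>
                     \<not> X \<subseteq> (\<Union>p\<in>F. branches p)"
  shows "\<exists>Y. marczewski_null Y \<and> set_sum X Y = UNIV \<and> \<not> s0_shiftable X"
proof -
  have "UNIV \<in> Sacks"
    unfolding Sacks_def perfect_tree_def is_tree_def by blast
  with dense have "D \<noteq> {}"
    by blast
  then obtain f :: "cantor \<Rightarrow> bool list set" where f: "range f = D"
    using card_of_ordLeq2[of D "UNIV :: cantor set"] card_of_tree_family_le[of D] by blast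
  then obtain Y where Y: "set_sum X Y = UNIV" "\<And>\<beta>. |branches (f \<beta>) \<inter> Y| <o |UNIV :: cantor set|"
    using translates_cover_with_small_traces[of X "branches \<circ> f"]
      exists_point_off_shifted_predecessors[OF _ D_sub invariant small] by auto
  then have "marczewski_null Y"
    using marczewski_null_if_small_traces[OF D_sub dense] f by blast
  with Y show ?thesis
    unfolding s0_shiftable_def by blast
qed

end
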